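(* Let $G_R=(V,E_R)$ and $G_M=(V,E_M)$ be two strongly connected directed graphs on the same vertex set $V$, $|V|=n$, with weight matrices $W_R=[w^R_{ij}]$ and $W_M=[w^M_{ij}]$. Suppose that (1) $\sum_{j\neq i}w^R_{ji}=\sum_{j\ne i}w^M_{ji}=1$ for all $i\in V$ (i.e. $W_R$ and $W_M$ are doubly stochastic), and (2) for every pair of nodes $i,j\in V$: $w^R_{ij}+w^R_{ji}=w^M_{ij}+w^M_{ji}$. Then for every $r>0$ the two-graph Moran process with resident graph $G_R$ and mutant graph $G_M$ has the Moran fixation probability, i.e. $f_{G_R,G_M}(r)=f_{\mathrm{Moran}}(r)$.
   Context: Two-graph Moran process: the vertex set is $V=\{1,\dots,n\}$; there is a resident graph $G_R=(V,E_R)$ and a mutant graph $G_M=(V,E_M)$, each strongly connected, with weight matrices $W_R=[w^R_{ij}]$ and $W_M=[w^M_{ij}]$ that are row-stochastic ($\sum_j w^R_{ij}=\sum_j w^M_{ij}=1$ for every $i$), where $w^R_{ij}>0$ iff $(i,j)\in E_R$ and $w^M_{ij}>0$ iff $(i,j)\in E_M$. The state is the mutant set $S\subseteq V$. Residents have fitness $1$ and mutants fitness $r>0$. In each step a vertex $i$ is chosen with probability proportional to its fitness (total fitness $F(S)=r|S|+n-|S|$); if $i$ is a mutant it picks $j$ with probability $w^M_{ij}$ and $j$ becomes a mutant, and if $i$ is a resident it picks $j$ with probability $w^R_{ij}$ and $j$ becomes a resident. Absorption occurs at $S=\emptyset$ (extinction) or $S=V$ (fixation). With $f(S)$ the fixation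 probability from $S$, the fixation probability is $f_{G_R,G_M}(r)=\frac1n\sum_{u\in V}f(\{u\})$. The Moran fixation probability is $f_{\mathrm{Moran}}(r)=\frac{1-1/r}{1-1/r^n}$ for $r\neq1$ (and $1/n$ for $r=1$), the fixation probability when both graphs are the complete graph. *)

theory Defs
  imports Complex_Main
begin

text \<open>Vertex set: a finite type 'v (so V = UNIV and n = CARD('v)).\<close>

definition edges_of :: "('v \<Rightarrow> 'v \<Rightarrow> real) \<Rightarrow> ('v \<times> 'v) set" where
  "edges_of W = {(i, j). W i j > 0}"

definition weighted_sc_graph :: "('v::finite \<Rightarrow> 'v \<Rightarrow> real) \<Rightarrow> bool" where
  "weighted_sc_graph W \<longleftrightarrow>
     (\<forall>i j. W i j \<ge> 0) \<and> (\<forall>i. (\<Sum>j\<in>UNIV. W i j) = 1) \<and>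
     (\<forall>i j. (i, j) \<in> (edges_of W)\<^sup>*)"

definition total_fitness :: "real \<Rightarrow> 'v::finite set \<Rightarrow> real" where
  "total_fitness r S = r * real (card S) + real (card (UNIV :: 'v set)) - real (card S)"

definition moran_step ::
  "('v::finite \<Rightarrow> 'v \<Rightarrow> real) \<Rightarrow> ('v \<Rightarrow> 'v \<Rightarrow> real) \<Rightarrow> real \<Rightarrow> 'v set \<Rightarrow> 'v set \<Rightarrow> real" where
  "moran_step WR WM r S T =
     (\<Sum>i\<in>UNIV. \<Sum>j\<in>UNIV.
        (if i \<in> S then r * WM i j else WR i j) / total_fitness r S *
        (if (if i \<in> S then insert j S else S - {j}) = T then 1 else 0))"

fun moran_steps ::
  "('v::finite \<Rightarrow> 'v \<Rightarrow> real) \<Rightarrow> ('v \<Rightarrow> 'v \<Rightarrow> real) \<Rightarrow> real \<Rightarrow> nat \<Rightarrow> 'v set \<Rightarrow> 'v set \<Rightarrow> real" where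
  "moran_steps WR WM r 0 S T = (if S = T then 1 else 0)"
| "moran_steps WR WM r (Suc t) S T =
     (\<Sum>U\<in>UNIV. moran_step WR WM r S U * moran_steps WR WM r t U T)"

text \<open>Fixation probability f(S) from state S: since V is absorbing,
  moran_steps t S V is the probability of having fixated by time t; f(S) is its limit.\<close>
definition fixation_from ::
  "('v::finite \<Rightarrow> 'v \<Rightarrow> real) \<Rightarrow> ('v \<Rightarrow> 'v \<Rightarrow> real) \<Rightarrow> real \<Rightarrow> 'v set \<Rightarrow> real" where
  "fixation_from WR WM r S = lim (\<lambda>t. moran_steps WR WM r t S UNIV)"

definition fixation_prob ::
  "('v::finite \<Rightarrow> 'v \<Rightarrow> real) \<Rightarrow> ('v \<Rightarrow> 'v \<Rightarrow> real) \<Rightarrow> real \<Rightarrow> real" where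
  "fixation_prob WR WM r = (\<Sum>u\<in>UNIV. fixation_from WR WM r {u}) / real (card (UNIV :: 'v set))"

definition f_Moran :: "nat \<Rightarrow> real \<Rightarrow> real" where
  "f_Moran n r = (if r = 1 then 1 / real n else (1 - 1 / r) / (1 - 1 / r ^ n))"

end

theory Submission
  imports Defs "HOL-Library.Cardinality"
begin

text \<open>Condition (2) says W_R + W_R^T = W_M + W_M^T, and a doubly stochastic matrix balances
  the flow across every cut; together they show that the mutant flow out of a mutant set S
  under W_M equals the resident flow into S under W_R. So from every state the number of
  mutants goes up with exactly r times the probability that it goes down, as in the Moran
  chain, and the Moran absorption probability h(k) = (1 - r^-k)/(1 - r^-n), evaluated at |S|,
  is harmonic for the process. Strong connectivity bounds the one-step variance of h from
  below on transient states, so h (1 - h) is a Lyapunov function and absorption is certain.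
  Hence the fixation probability from S is h(|S|), and from a single mutant h(1) = f_Moran(r).\<close>

subsection \<open>Flows across cuts\<close>

definition cut_flow :: "('v \<Rightarrow> 'v \<Rightarrow> real) \<Rightarrow> 'v set \<Rightarrow> 'v set \<Rightarrow> real" where
  "cut_flow W A B = (\<Sum>i\<in>A. \<Sum>j\<in>B. W i j)"

lemma offdiag_col_sum_imp_diag_zero:
  fixes W :: "'v::finite \<Rightarrow> 'v \<Rightarrow> real"
  assumes nonneg: "\<forall>i j. W i j \<ge> 0" and row: "\<forall>i. (\<Sum>j\<in>UNIV. W i j) = 1"
    and col: "\<forall>i. (\<Sum>j\<in>UNIV - {i}. W j i) = 1"
  shows "W i i = 0"
proof -
  have "(\<Sum>i\<in>UNIV. \<Sum>j\<in>UNIV. W j i) = (\<Sum>i\<in>UNIV. W i i + (\<Sum>j\<in>UNIV - {i}. W j i))"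
    by (intro sum.cong refl sum.remove) auto
  also have "\<dots> = (\<Sum>i\<in>UNIV. W i i) + real CARD('v)"
    using col by (simp add: sum.distrib)
  finally have "(\<Sum>i\<in>UNIV. W i i) = 0"
    using row sum.swap[of "\<lambda>i j. W i j" UNIV UNIV] by simp
  then show ?thesis using nonneg by (simp add: sum_nonneg_eq_0_iff)
qed

lemma offdiag_col_sum_imp_col_sum:
  fixes W :: "'v::finite \<Rightarrow> 'v \<Rightarrow> real"
  assumes "\<forall>i j. W i j \<ge> 0" and "\<forall>i. (\<Sum>j\<in>UNIV. W i j) = 1"
    and col: "\<forall>i. (\<Sum>j\<in>UNIV - {i}. W j i) = 1"
  shows "(\<Sum>j\<in>UNIV. W j i) = 1"
proof -
  have "(\<Sum>j\<in>UNIV. W j i) = W i i + (\<Sum>j\<in>UNIV - {i}. W j i)" by (simp add: sum.remove)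
  then show ?thesis using offdiag_col_sum_imp_diag_zero[OF assms] col by simp
qed

lemma offdiag_col_sum_imp_card_ge_2:
  fixes W :: "'v::finite \<Rightarrow> 'v \<Rightarrow> real"
  assumes "\<forall>i. (\<Sum>j\<in>UNIV - {i}. W j i) = 1"
  shows "CARD('v) \<ge> 2"
proof (rule ccontr)
  assume "\<not> CARD('v) \<ge> 2"
  moreover have "CARD('v) > 0" by simp
  ultimately have "CARD('v) = 1" by linarith
  then obtain x :: 'v where "UNIV = {x}" by (metis card_1_singletonE)
  then show False using assms by (metis Diff_cancel sum.empty zero_neq_one)
qed

lemma sum_UNIV_split:
  fixes f :: "'v::finite \<Rightarrow> real"
  shows "(\<Sum>i\<in>UNIV. f i) = (\<Sum>i\<in>S. f i) + (\<Sum>i\<in>- S. f i)"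
  by (metis Compl_eq_Diff_UNIV add.commute finite sum.subset_diff top_greatest)

lemma cut_flow_split:
  fixes W :: "'v::finite \<Rightarrow> 'v \<Rightarrow> real"
  shows "cut_flow W A UNIV = cut_flow W A S + cut_flow W A (- S)"
    and "cut_flow W UNIV B = cut_flow W S B + cut_flow W (- S) B"
  unfolding cut_flow_def by (simp_all only: sum_UNIV_split[of _ S] sum.distrib)

lemma doubly_stochastic_cut_balance:
  fixes W :: "'v::finite \<Rightarrow> 'v \<Rightarrow> real"
  assumes row: "\<forall>i. (\<Sum>j\<in>UNIV. W i j) = 1" and col: "\<forall>j. (\<Sum>i\<in>UNIV. W i j) = 1"
  shows "cut_flow W S (- S) = cut_flow W (- S) S"
proof -
  have "cut_flow W S UNIV = real (card S)" using row by (simp add: cut_flow_def)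
  moreover have "cut_flow W UNIV S = real (card S)"
    unfolding cut_flow_def by (subst sum.swap) (simp add: col)
  ultimately show ?thesis using cut_flow_split[of W S S] cut_flow_split[of W _ S] by linarith
qed

lemma cut_flow_symmetric_sum:
  fixes W :: "'v::finite \<Rightarrow> 'v \<Rightarrow> real"
  shows "(\<Sum>i\<in>S. \<Sum>j\<in>- S. W i j + W j i) = cut_flow W S (- S) + cut_flow W (- S) S"
  unfolding cut_flow_def by (simp add: sum.distrib sum.swap[of _ S "- S"])

lemma cut_flow_exchange:
  fixes WR WM :: "'v::finite \<Rightarrow> 'v \<Rightarrow> real"
  assumes "cut_flow WR S (- S) = cut_flow WR (- S) S"
    and "cut_flow WM S (- S) = cut_flow WM (- S) S"
    and "\<forall>i j. WR i j + WR j i = WM i j + WM j i"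
  shows "cut_flow WM S (- S) = cut_flow WR (- S) S"
  using assms cut_flow_symmetric_sum[where W = WR and S = S]
    cut_flow_symmetric_sum[where W = WM and S = S] by simp

lemma rtrancl_edges_leave_set:
  assumes "(s, t) \<in> (edges_of W)\<^sup>*" "s \<in> S" "t \<notin> S"
  shows "\<exists>i\<in>S. \<exists>j. j \<notin> S \<and> W i j > 0"
  using assms
proof (induction rule: rtrancl_induct)
  case (step y z)
  then show ?case by (cases "y \<in> S") (auto simp: edges_of_def)
qed simp

lemma weighted_sc_graph_edge_leaves:
  assumes "weighted_sc_graph W" "S \<noteq> {}" "S \<noteq> UNIV"
  shows "\<exists>i\<in>S. \<exists>j. j \<notin> S \<and> W i j > 0"
proof -
  obtain s t where "s \<in> S" "t \<notin> S" using assms(2,3) by blast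
  then show ?thesis
    using assms(1) rtrancl_edges_leave_set unfolding weighted_sc_graph_def by metis
qed

subsection \<open>The transition kernel as a sum over reproduction events\<close>

definition event_prob ::
  "('v \<Rightarrow> 'v \<Rightarrow> real) \<Rightarrow> ('v \<Rightarrow> 'v \<Rightarrow> real) \<Rightarrow> real \<Rightarrow> 'v::finite set \<Rightarrow> 'v \<Rightarrow> 'v \<Rightarrow> real" where
  "event_prob WR WM r S i j = (if i \<in> S then r * WM i j else WR i j) / total_fitness r S"

definition event_target :: "'v set \<Rightarrow> 'v \<Rightarrow> 'v \<Rightarrow> 'v set" where
  "event_target S i j = (if i \<in> S then insert j S else S - {j})"

lemma moran_step_expectation:
  fixes f :: "'v::finite set \<Rightarrow> real"
  shows "(\<Sum>U\<in>UNIV. moran_step WR WM r S U * f U) =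
    (\<Sum>i\<in>UNIV. \<Sum>j\<in>UNIV. event_prob WR WM r S i j * f (event_target S i j))"
proof -
  have "(\<Sum>U\<in>UNIV. moran_step WR WM r S U * f U) =
     (\<Sum>U\<in>UNIV. \<Sum>i\<in>UNIV. \<Sum>j\<in>UNIV.
        event_prob WR WM r S i j * (if event_target S i j = U then 1 else 0) * f U)"
    unfolding moran_step_def event_prob_def event_target_def by (simp only: sum_distrib_right)
  also have "\<dots> = (\<Sum>U\<in>UNIV. \<Sum>i\<in>UNIV. \<Sum>j\<in>UNIV.
        if event_target S i j = U then event_prob WR WM r S i j * f U else 0)"
    by (intro sum.cong refl) simp
  also have "\<dots> = (\<Sum>i\<in>UNIV. \<Sum>j\<in>UNIV. \<Sum>U\<in>UNIV.
        if event_target S i j = U then event_prob WR WM r S i j * f U else 0)"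
    by (subst sum.swap) (rule sum.cong[OF refl], rule sum.swap)
  also have "\<dots> = (\<Sum>i\<in>UNIV. \<Sum>j\<in>UNIV. event_prob WR WM r S i j * f (event_target S i j))"
    by simp
  finally show ?thesis .
qed

lemma moran_steps_Suc_expectation:
  fixes f :: "'v::finite set \<Rightarrow> real"
  shows "(\<Sum>T\<in>UNIV. moran_steps WR WM r (Suc t) S T * f T) =
    (\<Sum>U\<in>UNIV. moran_step WR WM r S U * (\<Sum>T\<in>UNIV. moran_steps WR WM r t U T * f T))"
proof -
  have "(\<Sum>T\<in>UNIV. moran_steps WR WM r (Suc t) S T * f T) =
    (\<Sum>T\<in>UNIV. \<Sum>U\<in>UNIV. moran_step WR WM r S U * (moran_steps WR WM r t U T * f T))"
    by (simp add: sum_distrib_right mult.assoc)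
  also have "\<dots> = (\<Sum>U\<in>UNIV. \<Sum>T\<in>UNIV. moran_step WR WM r S U * (moran_steps WR WM r t U T * f T))"
    by (rule sum.swap)
  also have "\<dots> = (\<Sum>U\<in>UNIV. moran_step WR WM r S U * (\<Sum>T\<in>UNIV. moran_steps WR WM r t U T * f T))"
    by (simp add: sum_distrib_left)
  finally show ?thesis .
qed

lemma moran_steps_0_expectation:
  fixes f :: "'v::finite set \<Rightarrow> real"
  shows "(\<Sum>T\<in>UNIV. moran_steps WR WM r 0 S T * f T) = f S"
proof -
  have "moran_steps WR WM r 0 S T * f T = (if S = T then f T else 0)" for T by simp
  then show ?thesis by simp
qed

subsection \<open>The Moran absorption probabilities\<close>

definition moran_potential :: "real \<Rightarrow> nat \<Rightarrow> nat \<Rightarrow> real" where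
  "moran_potential r N k =
     (if r = 1 then real k / real N else (1 - (1/r)^k) / (1 - (1/r)^N))"

lemma power_neq_one:
  fixes a :: real
  assumes "a > 0" "a \<noteq> 1" "N > 0"
  shows "a ^ N \<noteq> 1"
  using assms power_eq_1_iff[of a N] by auto

lemma moran_potential_recurrence:
  assumes "r > 0" "N > 0"
  shows "r * (moran_potential r N (Suc (Suc m)) - moran_potential r N (Suc m)) =
    moran_potential r N (Suc m) - moran_potential r N m"
proof (cases "r = 1")
  case False
  have "1 - (1/r)^N \<noteq> 0" using power_neq_one[of "1/r" N] assms False by simp
  moreover have "r * (1/r)^(Suc m) = (1/r)^m" using assms by simp
  ultimately show ?thesis using False unfolding moran_potential_def
    by (simp add: diff_divide_distrib[symmetric] algebra_simps)
qed (simp add: moran_potential_def diff_divide_distrib[symmetric])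

lemma moran_potential_Suc_neq:
  assumes "r > 0" "N > 0"
  shows "moran_potential r N (Suc k) \<noteq> moran_potential r N k"
proof (cases "r = 1")
  case False
  have "1 - (1/r)^N \<noteq> 0" using power_neq_one[of "1/r" N] assms False by simp
  moreover have "(1/r)^(Suc k) \<noteq> (1/r)^k"
    using assms False by (simp add: power_divide)
  ultimately show ?thesis using False unfolding moran_potential_def by simp
qed (use assms in \<open>simp add: moran_potential_def\<close>)

lemma moran_potential_0: "moran_potential r N 0 = 0"
  by (simp add: moran_potential_def)

lemma moran_potential_top:
  assumes "r > 0" "N > 0"
  shows "moran_potential r N N = 1"
  using power_neq_one[of "1/r" N] assms by (simp add: moran_potential_def)

lemma moran_potential_bounds:
  assumes "r > 0" "k \<le> N"
  shows "0 \<le> moran_potential r N k" "moran_potential r N k \<le> 1"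
proof -
  have "0 \<le> moran_potential r N k \<and> moran_potential r N k \<le> 1"
  proof (cases "r = 1")
    case False
    define a where "a = 1/r"
    have "a > 0" "a \<noteq> 1" using assms False by (auto simp: a_def)
    then consider "a < 1" | "a > 1" by linarith
    then show ?thesis
    proof cases
      case 1
      then have "a ^ N \<le> a ^ k" "a ^ k \<le> 1" "a ^ N < 1" if "N > 0"
        using \<open>a > 0\<close> assms(2) that by (simp_all add: power_decreasing power_le_one power_less_one_iff)
      then show ?thesis using False assms(2) unfolding moran_potential_def a_def[symmetric]
        by (cases "N = 0") simp_all
    next
      case 2
      then have "a ^ k \<le> a ^ N" "1 \<le> a ^ k" "1 < a ^ N" if "N > 0"
        using assms(2) that by (simp_all add: power_increasing one_less_power)
      then show ?thesis using False assms(2) unfolding moran_potential_def a_def[symmetric]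
        by (cases "N = 0") (simp_all add: divide_nonpos_neg divide_le_eq_1)
    qed
  qed (use assms in \<open>auto simp: moran_potential_def divide_le_eq_1\<close>)
  then show "0 \<le> moran_potential r N k" "moran_potential r N k \<le> 1" by simp_all
qed

lemma moran_potential_1_eq_f_Moran: "moran_potential r N 1 = f_Moran N r"
  by (simp add: moran_potential_def f_Moran_def power_one_over)

subsection \<open>Absorption of the two-graph Moran process\<close>

locale two_graph_moran =
  fixes WR WM :: "'v::finite \<Rightarrow> 'v \<Rightarrow> real" and r :: real
  assumes nonneg_R: "\<And>i j. WR i j \<ge> 0" and nonneg_M: "\<And>i j. WM i j \<ge> 0"
    and row_R: "\<And>i. (\<Sum>j\<in>UNIV. WR i j) = 1" and row_M: "\<And>i. (\<Sum>j\<in>UNIV. WM i j) = 1"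
    and mutant_out_eq_resident_in: "\<And>S. cut_flow WM S (- S) = cut_flow WR (- S) S"
    and mutant_edge_leaves: "\<And>S. S \<noteq> {} \<Longrightarrow> S \<noteq> UNIV \<Longrightarrow> \<exists>i\<in>S. \<exists>j. j \<notin> S \<and> WM i j > 0"
    and r_pos: "r > 0"
    and card_ge_2: "CARD('v) \<ge> 2"
begin

abbreviation "P \<equiv> moran_step WR WM r"
abbreviation "Pt \<equiv> moran_steps WR WM r"
abbreviation "p \<equiv> event_prob WR WM r"

lemma total_fitness_pos: "total_fitness r (S::'v set) > 0"
proof -
  have "real (card S) \<le> real CARD('v)" using card_mono[OF finite subset_UNIV] by simp
  moreover have "r * real (card S) > 0" if "card S > 0" using r_pos that by simp
  ultimately show ?thesis using card_ge_2 unfolding total_fitness_def by (cases "card S = 0") auto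
qed

lemma event_prob_nonneg: "p S i j \<ge> 0"
  unfolding event_prob_def using total_fitness_pos[of S] nonneg_R nonneg_M r_pos by simp

lemma event_prob_sum: "(\<Sum>i\<in>UNIV. \<Sum>j\<in>UNIV. p S i j) = 1"
proof -
  have row: "(\<Sum>j\<in>UNIV. p S i j) = (if i \<in> S then r else 1) / total_fitness r S" for i
    unfolding event_prob_def
    by (cases "i \<in> S") (simp_all add: row_R row_M flip: sum_divide_distrib sum_distrib_left)
  have "(\<Sum>i\<in>UNIV. if i \<in> S then r else 1) = r * real (card S) + real (card (- S))"
    by (simp add: sum.If_cases Compl_eq_Diff_UNIV Int_absorb1 Int_commute)
  also have "\<dots> = total_fitness r S"
    unfolding total_fitness_def by (simp add: Compl_eq_Diff_UNIV card_Diff_subset of_nat_diff card_mono)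
  finally show ?thesis
    using total_fitness_pos[of S] by (simp add: row flip: sum_divide_distrib)
qed

lemma moran_step_nonneg: "P S U \<ge> 0"
  unfolding moran_step_def using total_fitness_pos[of S] nonneg_R nonneg_M r_pos
  by (intro sum_nonneg mult_nonneg_nonneg divide_nonneg_pos) auto

lemma moran_steps_nonneg: "Pt t S U \<ge> 0"
  by (induction t arbitrary: S) (simp_all add: sum_nonneg moran_step_nonneg)

lemma moran_step_sum: "(\<Sum>U\<in>UNIV. P S U) = 1"
  using moran_step_expectation[of WR WM r S "\<lambda>_. 1"] event_prob_sum by simp

definition potential :: "'v set \<Rightarrow> real" where
  "potential S = moran_potential r CARD('v) (card S)"

lemma potential_bounds: "0 \<le> potential S" "potential S \<le> 1"
  unfolding potential_def
  using moran_potential_bounds[OF r_pos card_mono[OF finite subset_UNIV]] by auto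

lemma potential_empty: "potential {} = 0"
  by (simp add: potential_def moran_potential_0)

lemma potential_UNIV: "potential UNIV = 1"
  using moran_potential_top[OF r_pos] card_ge_2 by (simp add: potential_def)

lemma moran_step_drift:
  "(\<Sum>U\<in>UNIV. P S U * f U) - f S =
    (\<Sum>i\<in>UNIV. \<Sum>j\<in>UNIV. p S i j * (f (event_target S i j) - f S))"
  using moran_step_expectation[of WR WM r S f] event_prob_sum[of S]
  by (simp add: right_diff_distrib sum_subtractf flip: sum_distrib_right)

lemma potential_drift_cut:
  fixes S defines "h \<equiv> moran_potential r CARD('v)" and "k \<equiv> card S" and "F \<equiv> total_fitness r S"
  shows "(\<Sum>i\<in>UNIV. \<Sum>j\<in>UNIV. p S i j * (potential (event_target S i j) - potential S)) =
    cut_flow WM S (- S) * (r * (h (Suc k) - h k) / F) + cut_flow WR (- S) S * ((h (k - 1) - h k) / F)"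
proof -
  define up where "up = r * (h (Suc k) - h k) / F"
  define down where "down = (h (k - 1) - h k) / F"
  have event: "p S i j * (potential (event_target S i j) - potential S) =
      (if i \<in> S then (if j \<notin> S then WM i j * up else 0)
       else (if j \<in> S then WR i j * down else 0))" for i j
    by (cases "i \<in> S"; cases "j \<in> S")
      (simp_all add: event_target_def event_prob_def potential_def h_def k_def F_def up_def
        down_def insert_absorb)
  have row: "(\<Sum>j\<in>UNIV. p S i j * (potential (event_target S i j) - potential S)) =
      (if i \<in> S then (\<Sum>j\<in>- S. WM i j) * up else (\<Sum>j\<in>S. WR i j) * down)" for i
    unfolding event
    by (cases "i \<in> S") (simp_all add: sum.If_cases sum_distrib_right Compl_eq[symmetric])
  show ?thesis
    unfolding row cut_flow_def up_def[symmetric] down_def[symmetric]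
    by (simp add: sum.If_cases Compl_eq_Diff_UNIV sum_distrib_right)
qed

text \<open>The Moran recurrence r (h(k+1) - h(k)) = h(k) - h(k-1) cancels the two cut terms,
  which carry the same flow.\<close>
lemma moran_step_potential: "(\<Sum>U\<in>UNIV. P S U * potential U) = potential S"
proof (cases "S = {}")
  case False
  define h where "h = moran_potential r CARD('v)"
  obtain m where m: "card S = Suc m" using False by (metis card_0_eq finite not0_implies_Suc)
  have "cut_flow WR (- S) S * (r * (h (Suc (Suc m)) - h (Suc m)) + (h m - h (Suc m))) = 0"
    using moran_potential_recurrence[OF r_pos, of "CARD('v)" m] card_ge_2 by (simp add: h_def)
  then show ?thesis
    using moran_step_drift[of S potential] potential_drift_cut[of S]
    unfolding m mutant_out_eq_resident_in h_def[symmetric]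
    by (simp add: add_divide_distrib[symmetric] algebra_simps)
qed (use moran_step_drift[of "{}" potential] potential_drift_cut[of "{}"] in \<open>simp add: cut_flow_def\<close>)

lemma moran_steps_potential: "(\<Sum>T\<in>UNIV. Pt t S T * potential T) = potential S"
proof (induction t arbitrary: S)
  case 0
  show ?case by (rule moran_steps_0_expectation)
next
  case (Suc t)
  show ?case by (simp only: moran_steps_Suc_expectation Suc.IH moran_step_potential)
qed

definition step_variance :: "'v set \<Rightarrow> real" where
  "step_variance S = (\<Sum>U\<in>UNIV. P S U * (potential U - potential S)^2)"

lemma step_variance_pos:
  assumes "S \<noteq> {}" "S \<noteq> UNIV"
  shows "step_variance S > 0"
proof -
  obtain i j where ij: "i \<in> S" "j \<notin> S" "WM i j > 0" using mutant_edge_leaves[OF assms] by blast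
  let ?term = "\<lambda>i j. p S i j * (potential (event_target S i j) - potential S)^2"
  have nonneg: "?term i' j' \<ge> 0" for i' j' using event_prob_nonneg by simp
  have "p S i j > 0" using ij total_fitness_pos[of S] r_pos by (simp add: event_prob_def)
  moreover have "potential (event_target S i j) \<noteq> potential S"
    using ij moran_potential_Suc_neq[OF r_pos, of "CARD('v)" "card S"] card_ge_2
    by (simp add: event_target_def potential_def)
  ultimately have "0 < ?term i j" by simp
  also have "\<dots> \<le> (\<Sum>j\<in>UNIV. ?term i j)" by (rule member_le_sum) (auto simp: nonneg)
  also have "\<dots> \<le> (\<Sum>i\<in>UNIV. \<Sum>j\<in>UNIV. ?term i j)"
    by (rule member_le_sum) (auto simp: nonneg intro: sum_nonneg)
  finally show ?thesis unfolding step_variance_def moran_step_expectation .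
qed

definition spread :: "'v set \<Rightarrow> real" where
  "spread S = potential S * (1 - potential S)"

lemma spread_nonneg: "spread S \<ge> 0"
  unfolding spread_def using potential_bounds[of S] by simp

lemma moran_step_spread: "(\<Sum>U\<in>UNIV. P S U * spread U) = spread S - step_variance S"
proof -
  have "step_variance S = (\<Sum>U\<in>UNIV. P S U * (potential U)^2
      - (2 * potential S) * (P S U * potential U) + (potential S)^2 * P S U)"
    unfolding step_variance_def by (intro sum.cong refl) (simp add: power2_eq_square algebra_simps)
  also have "\<dots> = (\<Sum>U\<in>UNIV. P S U * (potential U)^2)
      - 2 * potential S * (\<Sum>U\<in>UNIV. P S U * potential U) + (potential S)^2 * (\<Sum>U\<in>UNIV. P S U)"
    by (simp add: sum.distrib sum_subtractf sum_distrib_left)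
  finally have "step_variance S = (\<Sum>U\<in>UNIV. P S U * (potential U)^2) - (potential S)^2"
    using moran_step_potential[of S] moran_step_sum[of S] by (simp add: power2_eq_square)
  moreover have "(\<Sum>U\<in>UNIV. P S U * spread U) =
      (\<Sum>U\<in>UNIV. P S U * potential U) - (\<Sum>U\<in>UNIV. P S U * (potential U)^2)"
    by (simp add: spread_def power2_eq_square algebra_simps sum_subtractf)
  ultimately show ?thesis using moran_step_potential[of S]
    by (simp add: spread_def power2_eq_square algebra_simps)
qed

definition transient :: "'v set \<Rightarrow> bool" where
  "transient S \<longleftrightarrow> S \<noteq> {} \<and> S \<noteq> UNIV"

definition min_variance :: real where
  "min_variance = Min (step_variance ` Collect transient)"

lemma min_variance_pos: "min_variance > 0"
proof -
  fix x :: 'v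
  have "card {x} < CARD('v)" using card_ge_2 by simp
  then have "transient {x}" unfolding transient_def by (metis empty_not_insert less_irrefl)
  then have "Collect transient \<noteq> {}" by blast
  then show ?thesis
    unfolding min_variance_def using step_variance_pos by (simp add: Min_gr_iff transient_def)
qed

lemma step_variance_ge: "step_variance S \<ge> min_variance * of_bool (transient S)"
proof (cases "transient S")
  case False
  then show ?thesis unfolding step_variance_def by (simp add: sum_nonneg moran_step_nonneg)
qed (simp add: min_variance_def)

definition transient_prob :: "nat \<Rightarrow> 'v set \<Rightarrow> real" where
  "transient_prob t S = (\<Sum>T\<in>UNIV. Pt t S T * of_bool (transient T))"

text \<open>Each step lowers the expected spread by at least min_variance times the probability
  of being transient, so the expected time spent in transient states is finite.\<close>
lemma spread_lyapunov:
  "(\<Sum>T\<in>UNIV. Pt t S T * spread T) + min_variance * (\<Sum>k<t. transient_prob k S) \<le> spread S"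
proof (induction t arbitrary: S)
  case 0
  then show ?case by (simp only: moran_steps_0_expectation lessThan_0 sum.empty)
next
  case (Suc t)
  have shift: "(\<Sum>k<Suc t. transient_prob k S) =
      of_bool (transient S) + (\<Sum>U\<in>UNIV. P S U * (\<Sum>k<t. transient_prob k U))"
    unfolding transient_prob_def sum.lessThan_Suc_shift moran_steps_Suc_expectation
      moran_steps_0_expectation
    by (simp add: sum_distrib_left sum.swap[of _ "{..<t}" UNIV])
  have "(\<Sum>T\<in>UNIV. Pt (Suc t) S T * spread T) + min_variance * (\<Sum>k<Suc t. transient_prob k S)
     = (\<Sum>U\<in>UNIV. P S U * ((\<Sum>T\<in>UNIV. Pt t U T * spread T)
         + min_variance * (\<Sum>k<t. transient_prob k U))) + min_variance * of_bool (transient S)"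
    unfolding shift moran_steps_Suc_expectation
    by (simp add: distrib_left sum.distrib sum_distrib_left algebra_simps)
  also have "\<dots> \<le> (\<Sum>U\<in>UNIV. P S U * spread U) + min_variance * of_bool (transient S)"
    using Suc.IH by (intro add_right_mono sum_mono mult_left_mono moran_step_nonneg) auto
  also have "\<dots> \<le> spread S" using moran_step_spread[of S] step_variance_ge[of S] by simp
  finally show ?case .
qed

lemma transient_prob_tendsto_0: "(\<lambda>t. transient_prob t S) \<longlonglongrightarrow> 0"
proof (rule summable_LIMSEQ_zero, rule bounded_imp_summable)
  show "0 \<le> transient_prob t S" for t
    unfolding transient_prob_def by (simp add: sum_nonneg moran_steps_nonneg)
  show "(\<Sum>k\<le>t. transient_prob k S) \<le> spread S / min_variance" for t
  proof -
    have "0 \<le> (\<Sum>T\<in>UNIV. Pt (Suc t) S T * spread T)"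
      by (intro sum_nonneg mult_nonneg_nonneg moran_steps_nonneg spread_nonneg)
    then have "min_variance * (\<Sum>k<Suc t. transient_prob k S) \<le> spread S"
      using spread_lyapunov[of "Suc t" S] by linarith
    then show ?thesis
      using min_variance_pos by (simp add: lessThan_Suc_atMost field_simps)
  qed
qed

lemma moran_steps_fixation_tendsto: "(\<lambda>t. Pt t S UNIV) \<longlonglongrightarrow> potential S"
proof (rule tendsto_sandwich)
  have "potential S \<le> transient_prob t S + Pt t S UNIV" for t
  proof -
    have "potential S \<le> (\<Sum>T\<in>UNIV. Pt t S T * (of_bool (transient T) + of_bool (T = UNIV)))"
      unfolding moran_steps_potential[of t S, symmetric]
      using potential_bounds potential_empty
      by (intro sum_mono mult_left_mono moran_steps_nonneg) (auto simp: transient_def)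
    then show ?thesis
      by (simp add: transient_prob_def distrib_left sum.distrib if_distrib cong: if_cong)
  qed
  then show "\<forall>\<^sub>F t in sequentially. potential S - transient_prob t S \<le> Pt t S UNIV"
    by (simp add: algebra_simps)
  have "Pt t S UNIV * potential UNIV \<le> (\<Sum>T\<in>UNIV. Pt t S T * potential T)" for t
    by (rule member_le_sum) (simp_all add: moran_steps_nonneg potential_bounds)
  then show "\<forall>\<^sub>F t in sequentially. Pt t S UNIV \<le> potential S"
    using moran_steps_potential potential_UNIV by simp
  show "(\<lambda>t. potential S - transient_prob t S) \<longlonglongrightarrow> potential S"
    using tendsto_diff[OF tendsto_const transient_prob_tendsto_0] by simp
qed simp

lemma fixation_prob_eq_f_Moran: "fixation_prob WR WM r = f_Moran CARD('v) r"
proof -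
  have "fixation_from WR WM r {u} = f_Moran CARD('v) r" for u
  proof -
    have "fixation_from WR WM r {u} = moran_potential r CARD('v) (card {u})"
      unfolding fixation_from_def potential_def[symmetric]
      using moran_steps_fixation_tendsto by (rule limI)
    moreover have "card {u} = 1" by simp
    ultimately show ?thesis by (simp only: moran_potential_1_eq_f_Moran)
  qed
  then show ?thesis using card_ge_2 by (simp add: fixation_prob_def)
qed

end

theorem theorem2:
  fixes WR WM :: "'v::finite \<Rightarrow> 'v \<Rightarrow> real" and r :: real
  assumes "weighted_sc_graph WR" and "weighted_sc_graph WM"
    and "\<forall>i. (\<Sum>j\<in>UNIV - {i}. WR j i) = 1"
    and "\<forall>i. (\<Sum>j\<in>UNIV - {i}. WM j i) = 1"
    and "\<forall>i j. WR i j + WR j i = WM i j + WM j i"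
    and "r > 0"
  shows "fixation_prob WR WM r = f_Moran (card (UNIV :: 'v set)) r"
proof -
  have nonneg_R: "\<forall>i j. WR i j \<ge> 0" and row_R: "\<forall>i. (\<Sum>j\<in>UNIV. WR i j) = 1"
    and nonneg_M: "\<forall>i j. WM i j \<ge> 0" and row_M: "\<forall>i. (\<Sum>j\<in>UNIV. WM i j) = 1"
    using assms(1,2) unfolding weighted_sc_graph_def by auto
  have "cut_flow WR S (- S) = cut_flow WR (- S) S" for S
    using offdiag_col_sum_imp_col_sum[OF nonneg_R row_R assms(3)]
    by (intro doubly_stochastic_cut_balance row_R) auto
  moreover have "cut_flow WM S (- S) = cut_flow WM (- S) S" for S
    using offdiag_col_sum_imp_col_sum[OF nonneg_M row_M assms(4)]
    by (intro doubly_stochastic_cut_balance row_M) auto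
  ultimately have "cut_flow WM S (- S) = cut_flow WR (- S) S" for S
    using cut_flow_exchange assms(5) by blast
  then interpret two_graph_moran WR WM r
    using nonneg_R nonneg_M row_R row_M weighted_sc_graph_edge_leaves[OF assms(2)] assms(6)
      offdiag_col_sum_imp_card_ge_2[OF assms(3)]
    by unfold_locales auto
  show ?thesis by (rule fixation_prob_eq_f_Moran)
qed

end
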